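(* Let $\lambda\in k$, $\lambda\neq0$. (i) Let $(A,\succ,\prec)$ be a Leibniz-dendriform algebra and $r\in A\otimes A$ such that $S(r)=0$, $r+\tau(r)$ is invariant and $T_{r+\tau(r)}$ is a linear isomorphism (i.e. $(A,\succ,\prec,\Delta_{\succ,r},\Delta_{\prec,r})$ is a factorizable Leibniz-dendriform bialgebra). Define $\omega(x,y)=-\lambda\langle T_{r+\tau(r)}^{-1}(x),y\rangle$ and $P=T_r\omega^\sharp$ (i.e. $P(x)=T_r(\omega^\sharp(x))$). Then $(A,\succ,\prec,P,\omega)$ is a quadratic Rota–Baxter Leibniz-dendriform algebra of weight $\lambda$. (ii) Conversely, let $(A,\succ,\prec,P,\omega)$ be a quadratic Rota–Baxter Leibniz-dendriform algebra of weight $\lambda$, and let $r\in A\otimes A$ be defined by $T_r=P(\omega^\sharp)^{-1}$. Then $S(r)=0$, $r+\tau(r)$ is invariant and $T_{r+\tau(r)}$ is a linear isomorphism; hence $(A,\succ,\prec,\Delta_{\succ,r},\Delta_{\prec,r})$ is a factorizable Leibniz-dendriform bialgebra.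
   Context: $\langle\cdot,\cdot\rangle$ is the natural pairing, $I$ the identity, $\tau(a\otimes b)=b\otimes a$; all spaces finite-dimensional over $k$. A Leibniz-dendriform algebra is a vector space $A$ with bilinear operations $\succ,\prec$ such that, with $x\circ y:=x\succ y+x\prec y$, for all $x,y,z$: $(x\circ y)\succ z=x\succ(y\succ z)-y\succ(x\succ z)$, $y\prec(x\circ z)+(x\succ y)\prec z=x\succ(y\prec z)$, $x\prec(y\circ z)=(x\prec y)\prec z+y\succ(x\prec z)$. Write $x\odot y:=x\succ y+y\prec x$, $x\star y:=x\circ y+y\circ x$; $L_*(x)y=x*y$, $R_*(x)y=y*x$; $L_\odot:=L_\succ+R_\prec$, $L_\star:=L_\circ+R_\circ$. For $r=\sum_ia_i\otimes b_i$: $T_r:A^*\to A$, $\langle T_r(\zeta),\eta\rangle=\langle r,\zeta\otimes\eta\rangle$; $S(r):=\sum_{i,j}\big(a_i\otimes a_j\otimes (b_j\circ b_i)-a_i\otimes (b_i\odot a_j)\otimes b_j-(a_i\succ a_j)\otimes b_i\otimes b_j\big)$. $s\in A\otimes A$ is invariant if for all $x$: $(L_\odot(x)\otimes I-I\otimes R_\circ(x))s=0$ and $(L_\star(x)\otimes I-I\otimes R_\prec(x))\tau(s)=0$. Coboundary maps $\Delta_{\succ,r}(x)=(L_\odot(x)\otimes I-I\otimes R_\circ(x))r$, $\Delta_{\prec,r}(x)=(L_\star(x)\otimes I-I\otimes R_\prec(x))\tau(r)$; the resulting bialgebra is called factorizable when $S(r)=0$, $r+\tau(r)$ is invariant and $T_{r+\tau(r)}$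 is bijective. For a bilinear form $\omega$, $\omega^\sharp:A\to A^*$ is $\langle\omega^\sharp(x),y\rangle=\omega(x,y)$. A quadratic Leibniz-dendriform algebra is one with a non-degenerate symmetric bilinear form $\omega$ with $\omega(x\prec y,z)=\omega(x,y\circ z+z\circ y)$ and $\omega(x\succ y,z)=-\omega(y,x\circ z)$ for all $x,y,z$. A Rota–Baxter operator of weight $\lambda$ on $(A,\succ,\prec)$ is a linear $P$ with $P(x)\succ P(y)=P(P(x)\succ y+x\succ P(y)+\lambda x\succ y)$ and $P(x)\prec P(y)=P(P(x)\prec y+x\prec P(y)+\lambda x\prec y)$. $(A,\succ,\prec,P,\omega)$ is a quadratic Rota–Baxter Leibniz-dendriform algebra of weight $\lambda$ if $(A,\succ,\prec,\omega)$ is quadratic, $P$ is a Rota–Baxter operator of weight $\lambda$, and $\omega(P(x),y)+\omega(x,P(y))+\lambda\omega(x,y)=0$ for all $x,y$. *)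

theory Defs
  imports Main "HOL-Library.Function_Algebras"
begin

(* Conventions: the finite-dimensional space A is identified with k^n, i.e. functions
   'n \<Rightarrow> 'k for a finite index type 'n (coordinates w.r.t. a fixed basis e_i).
   A* is also represented by 'n \<Rightarrow> 'k (coordinates w.r.t. the dual basis),
   A \<otimes> A by 'n \<Rightarrow> 'n \<Rightarrow> 'k, A \<otimes> A \<otimes> A by 'n \<Rightarrow> 'n \<Rightarrow> 'n \<Rightarrow> 'k. *)

definition smul :: "'k::field \<Rightarrow> ('n \<Rightarrow> 'k) \<Rightarrow> ('n \<Rightarrow> 'k)" where
  "smul c x = (\<lambda>i. c * x i)"

definition lin :: "(('n \<Rightarrow> 'k::field) \<Rightarrow> ('m \<Rightarrow> 'k)) \<Rightarrow> bool" where
  "lin f \<longleftrightarrow> (\<forall>x y. f (x + y) = f x + f y) \<and> (\<forall>c x. f (smul c x) = smul c (f x))"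

definition bilin :: "(('n \<Rightarrow> 'k::field) \<Rightarrow> ('n \<Rightarrow> 'k) \<Rightarrow> ('n \<Rightarrow> 'k)) \<Rightarrow> bool" where
  "bilin op \<longleftrightarrow> (\<forall>x. lin (op x)) \<and> (\<forall>y. lin (\<lambda>x. op x y))"

definition bilin_form :: "(('n \<Rightarrow> 'k::field) \<Rightarrow> ('n \<Rightarrow> 'k) \<Rightarrow> 'k) \<Rightarrow> bool" where
  "bilin_form w \<longleftrightarrow>
     (\<forall>x y z. w (x + y) z = w x z + w y z) \<and> (\<forall>c x z. w (smul c x) z = c * w x z) \<and>
     (\<forall>x y z. w x (y + z) = w x y + w x z) \<and> (\<forall>c x z. w x (smul c z) = c * w x z)"

definition circ where "circ succ prec x y = succ x y + prec x y"
definition odot where "odot succ prec x y = succ x y + prec y x"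
definition star where "star succ prec x y = circ succ prec x y + circ succ prec y x"

definition LDA :: "(('n \<Rightarrow> 'k::field) \<Rightarrow> ('n \<Rightarrow> 'k) \<Rightarrow> ('n \<Rightarrow> 'k)) \<Rightarrow> (('n \<Rightarrow> 'k) \<Rightarrow> ('n \<Rightarrow> 'k) \<Rightarrow> ('n \<Rightarrow> 'k)) \<Rightarrow> bool" where
  "LDA succ prec \<longleftrightarrow> bilin succ \<and> bilin prec \<and>
    (\<forall>x y z.
       succ (circ succ prec x y) z = succ x (succ y z) - succ y (succ x z) \<and>
       prec y (circ succ prec x z) + prec (succ x y) z = succ x (prec y z) \<and>
       prec x (circ succ prec y z) = prec (prec x y) z + succ y (prec x z))"

definition basis :: "'n \<Rightarrow> ('n \<Rightarrow> 'k::field)" where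
  "basis i = (\<lambda>j. if j = i then 1 else 0)"

definition pairing :: "('n::finite \<Rightarrow> 'k::field) \<Rightarrow> ('n \<Rightarrow> 'k) \<Rightarrow> 'k" where
  "pairing z x = (\<Sum>i\<in>UNIV. z i * x i)"

definition tensor2 :: "('n \<Rightarrow> 'k::field) \<Rightarrow> ('n \<Rightarrow> 'k) \<Rightarrow> ('n \<Rightarrow> 'n \<Rightarrow> 'k)" where
  "tensor2 u v = (\<lambda>a b. u a * v b)"

definition tensor3 :: "('n \<Rightarrow> 'k::field) \<Rightarrow> ('n \<Rightarrow> 'k) \<Rightarrow> ('n \<Rightarrow> 'k) \<Rightarrow> ('n \<Rightarrow> 'n \<Rightarrow> 'n \<Rightarrow> 'k)" where
  "tensor3 u v w = (\<lambda>a b c. u a * v b * w c)"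

(* (f \<otimes> g) s for linear f, g *)
definition tmap :: "(('n::finite \<Rightarrow> 'k::field) \<Rightarrow> ('n \<Rightarrow> 'k)) \<Rightarrow> (('n \<Rightarrow> 'k) \<Rightarrow> ('n \<Rightarrow> 'k)) \<Rightarrow> ('n \<Rightarrow> 'n \<Rightarrow> 'k) \<Rightarrow> ('n \<Rightarrow> 'n \<Rightarrow> 'k)" where
  "tmap f g s = (\<Sum>i\<in>UNIV. \<Sum>j\<in>UNIV. tensor2 (smul (s i j) (f (basis i))) (g (basis j)))"

definition tau :: "('n \<Rightarrow> 'n \<Rightarrow> 'k) \<Rightarrow> ('n \<Rightarrow> 'n \<Rightarrow> 'k)" where
  "tau s = (\<lambda>a b. s b a)"

(* T_r : A* \<rightarrow> A,  <T_r z, w> = <r, z \<otimes> w> *)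
definition Tr :: "('n::finite \<Rightarrow> 'n \<Rightarrow> 'k::field) \<Rightarrow> ('n \<Rightarrow> 'k) \<Rightarrow> ('n \<Rightarrow> 'k)" where
  "Tr r z = (\<lambda>j. \<Sum>i\<in>UNIV. r i j * z i)"

(* S(r) for r = \<Sum>_{i,j} (r_ij e_i) \<otimes> e_j *)
definition Sop :: "(('n::finite \<Rightarrow> 'k::field) \<Rightarrow> ('n \<Rightarrow> 'k) \<Rightarrow> ('n \<Rightarrow> 'k)) \<Rightarrow> (('n \<Rightarrow> 'k) \<Rightarrow> ('n \<Rightarrow> 'k) \<Rightarrow> ('n \<Rightarrow> 'k)) \<Rightarrow> ('n \<Rightarrow> 'n \<Rightarrow> 'k) \<Rightarrow> ('n \<Rightarrow> 'n \<Rightarrow> 'n \<Rightarrow> 'k)" where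
  "Sop succ prec r = (\<Sum>i\<in>UNIV. \<Sum>j\<in>UNIV. \<Sum>k\<in>UNIV. \<Sum>l\<in>UNIV.
      tensor3 (smul (r i j * r k l) (basis i)) (basis k) (circ succ prec (basis l) (basis j))
    - tensor3 (smul (r i j * r k l) (basis i)) (odot succ prec (basis j) (basis k)) (basis l)
    - tensor3 (smul (r i j * r k l) (succ (basis i) (basis k))) (basis j) (basis l))"

definition invariant where
  "invariant succ prec s \<longleftrightarrow> (\<forall>x.
     tmap (odot succ prec x) id s - tmap id (\<lambda>y. circ succ prec y x) s = 0 \<and>
     tmap (star succ prec x) id (tau s) - tmap id (\<lambda>y. prec y x) (tau s) = 0)"

definition factorizable where
  "factorizable succ prec r \<longleftrightarrow> Sop succ prec r = 0 \<and> invariant succ prec (r + tau r) \<and>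
     bij (Tr (r + tau r))"

definition sharp :: "(('n \<Rightarrow> 'k::field) \<Rightarrow> ('n \<Rightarrow> 'k) \<Rightarrow> 'k) \<Rightarrow> ('n \<Rightarrow> 'k) \<Rightarrow> ('n \<Rightarrow> 'k)" where
  "sharp w x = (\<lambda>i. w x (basis i))"

definition quadratic where
  "quadratic succ prec w \<longleftrightarrow> LDA succ prec \<and> bilin_form w \<and> (\<forall>x y. w x y = w y x) \<and>
     (\<forall>x. (\<forall>y. w x y = 0) \<longrightarrow> x = 0) \<and>
     (\<forall>x y z. w (prec x y) z = w x (circ succ prec y z + circ succ prec z y)) \<and>
     (\<forall>x y z. w (succ x y) z = - w y (circ succ prec x z))"

definition RB_op where
  "RB_op succ prec lam P \<longleftrightarrow> lin P \<and> (\<forall>x y.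
     succ (P x) (P y) = P (succ (P x) y + succ x (P y) + smul lam (succ x y)) \<and>
     prec (P x) (P y) = P (prec (P x) y + prec x (P y) + smul lam (prec x y)))"

definition quadRB where
  "quadRB succ prec P w lam \<longleftrightarrow> quadratic succ prec w \<and> RB_op succ prec lam P \<and>
     (\<forall>x y. w (P x) y + w x (P y) + lam * w x y = 0)"

end

(* Put W = \<omega>\<sharp>. Both hypotheses lead to the same dictionary
     T_r W = P   and   T_\<tau>(r) W = -(P + \<lambda> id),
   the second identity being equivalent to the compatibility
   \<omega>(P x, y) + \<omega>(x, P y) + \<lambda> \<omega>(x, y) = 0; in particular T_(r + \<tau>(r)) = -\<lambda> W^-1 is bijective.
   Through W, invariance of r + \<tau>(r) becomes invariance of \<omega>, and the pairing of S(r) with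
   W y \<otimes> W x \<otimes> W z becomes \<omega>(z, P x \<circ> P y - P (P x \<circ> y + x \<circ> P y + \<lambda> x \<circ> y)), so S(r) = 0
   says exactly that P is a Rota-Baxter operator for \<circ>. For an invariant nondegenerate \<omega> this
   already makes P a Rota-Baxter operator for \<succ> and \<prec> separately. Hence, given the dictionary,
   "quadratic Rota-Baxter" and "factorizable" are the same condition. *)

theory Submission
  imports Defs "HOL-Analysis.Cartesian_Space"
begin

section \<open>Linear algebra in coordinates\<close>

lemma sum_fun_apply: "(\<Sum>i\<in>S. f i) x = (\<Sum>i\<in>S. f i x)"
  for f :: "'a \<Rightarrow> 'b \<Rightarrow> 'c::comm_monoid_add"
  by (induction S rule: infinite_finite_induct) auto

lemma smul_apply [simp]: "smul c x i = c * x i"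
  by (simp add: smul_def)

lemma smul_add: "smul c (x + y) = smul c x + smul c y"
  by (simp add: fun_eq_iff algebra_simps)

lemma uminus_eq_smul: "- x = smul (-1) x"
  by (simp add: fun_eq_iff)

lemma basis_apply: "basis i j = (if j = i then 1 else 0)"
  by (simp add: basis_def)

lemma mult_indicator_simps:
  "x * (if P then 1 else 0) = (if P then x else 0)"
  "(if P then 1 else 0) * x = (if P then x else 0)"
  "x * (if P then y else 0) = (if P then x * y else 0)"
  "(if P then y else 0) * x = (if P then y * x else 0)"
  "(\<Sum>i\<in>S. if P then f i else 0) = (if P then (\<Sum>i\<in>S. f i) else 0)"
  for x y :: "'a::semiring_1"
  by simp_all

lemma sum_smul_basis: "(\<Sum>a\<in>UNIV. smul (x a) (basis a)) = x"
  for x :: "'n::finite \<Rightarrow> 'k::field"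
  by (rule ext) (simp add: sum_fun_apply basis_apply if_distrib cong: if_cong)

lemma lin_add: "lin f \<Longrightarrow> f (x + y) = f x + f y"
  by (simp add: lin_def)

lemma lin_smul: "lin f \<Longrightarrow> f (smul c x) = smul c (f x)"
  by (simp add: lin_def)

lemma lin_zero: "lin f \<Longrightarrow> f 0 = 0"
  using lin_smul[of f 0 0] by (simp add: smul_def zero_fun_def)

lemma lin_uminus: "lin f \<Longrightarrow> f (- x) = - f x"
  by (simp add: uminus_eq_smul lin_smul del: smul_apply)

lemma lin_sum: "lin f \<Longrightarrow> f (\<Sum>i\<in>S. g i) = (\<Sum>i\<in>S. f (g i))"
  by (induction S rule: infinite_finite_induct) (auto simp: lin_zero lin_add)

lemma lin_comp: "lin f \<Longrightarrow> lin g \<Longrightarrow> lin (\<lambda>x. f (g x))"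
  by (simp add: lin_def)

lemma lin_eq_sum_basis: "lin f \<Longrightarrow> f x = (\<Sum>a\<in>UNIV. smul (x a) (f (basis a)))"
  for x :: "'n::finite \<Rightarrow> 'k::field"
  by (metis (no_types, lifting) lin_smul lin_sum sum.cong sum_smul_basis)

lemma lin_inv: "lin f \<Longrightarrow> bij f \<Longrightarrow> lin (inv f)"
  unfolding lin_def by (metis bij_inv_eq_iff)

lemma lin_inj_imp_surj:
  fixes f :: "('n::finite \<Rightarrow> 'k::field) \<Rightarrow> ('n \<Rightarrow> 'k)"
  assumes lin: "lin f" and inj: "inj f"
  shows "surj f"
proof -
  define g :: "'k^'n \<Rightarrow> 'k^'n" where "g v = vec_lambda (f (vec_nth v))" for v
  have "Vector_Spaces.linear (*s) (*s) g"
  proof unfold_locales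
    fix x y :: "'k^'n" and c :: 'k
    have "vec_nth (x + y) = vec_nth x + vec_nth y" by (rule ext) simp
    then show "g (x + y) = g x + g y"
      by (simp add: g_def lin_add[OF lin] vec_eq_iff)
    have "vec_nth (c *s x) = smul c (vec_nth x)" by (rule ext) simp
    then show "g (c *s x) = c *s g x"
      by (simp add: g_def lin_smul[OF lin] vec_eq_iff)
  qed
  moreover have "inj g"
    using inj by (auto simp: inj_def g_def vec_eq_iff fun_eq_iff)
  ultimately have "surj g"
    by (rule vec.linear_inj_imp_surj)
  then have "f (vec_nth (inv g (vec_lambda y))) = y" for y
    by (metis g_def surj_f_inv_f vec_lambda_inverse UNIV_I)
  then show ?thesis
    unfolding surj_def by metis
qed

definition lin_form :: "(('n \<Rightarrow> 'k::field) \<Rightarrow> 'k) \<Rightarrow> bool" where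
  "lin_form f \<longleftrightarrow> (\<forall>x y. f (x + y) = f x + f y) \<and> (\<forall>c x. f (smul c x) = c * f x)"

lemma lin_form_zero: "lin_form f \<Longrightarrow> f 0 = 0"
  unfolding lin_form_def by (metis add_cancel_right_right)

lemma lin_form_sum: "lin_form f \<Longrightarrow> f (\<Sum>i\<in>S. g i) = (\<Sum>i\<in>S. f (g i))"
  by (induction S rule: infinite_finite_induct) (auto simp: lin_form_zero lin_form_def)

lemma lin_form_eq_sum_basis: "lin_form f \<Longrightarrow> f x = (\<Sum>a\<in>UNIV. x a * f (basis a))"
  for x :: "'n::finite \<Rightarrow> 'k::field"
  by (metis (no_types, lifting) lin_form_def lin_form_sum sum.cong sum_smul_basis)

lemma lin_form_diff: "lin_form f \<Longrightarrow> lin_form g \<Longrightarrow> lin_form (\<lambda>x. f x - g x)"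
  by (simp add: lin_form_def algebra_simps)

lemma bilinear_eq_zero_on_basis:
  fixes F :: "('n::finite \<Rightarrow> 'k::field) \<Rightarrow> ('n \<Rightarrow> 'k) \<Rightarrow> 'k"
  assumes "\<And>y. lin_form (\<lambda>x. F x y)" and "\<And>x. lin_form (F x)"
    and "\<And>a b. F (basis a) (basis b) = 0"
  shows "F x y = 0"
  using assms lin_form_eq_sum_basis[of "\<lambda>x. F x _"] lin_form_eq_sum_basis[of "F _"]
  by (metis (no_types, lifting) mult_zero_right sum.neutral)

lemma trilinear_eq_zero_on_basis:
  fixes F :: "('n::finite \<Rightarrow> 'k::field) \<Rightarrow> ('n \<Rightarrow> 'k) \<Rightarrow> ('n \<Rightarrow> 'k) \<Rightarrow> 'k"
  assumes "\<And>y z. lin_form (\<lambda>x. F x y z)" and "\<And>x z. lin_form (\<lambda>y. F x y z)"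
    and "\<And>x y. lin_form (F x y)" and "\<And>a b c. F (basis a) (basis b) (basis c) = 0"
  shows "F x y z = 0"
proof -
  have "F (basis a) y z = 0" for a y z
    by (rule bilinear_eq_zero_on_basis[of "F (basis a)"]) (use assms in auto)
  then show ?thesis
    using assms(1) lin_form_eq_sum_basis by (metis (no_types, lifting) mult_zero_right sum.neutral)
qed

lemma lin_form_pairing_left: "lin_form (\<lambda>z. pairing z u)"
  by (simp add: lin_form_def pairing_def sum.distrib sum_distrib_left algebra_simps)

lemma lin_form_pairing_comp: "lin f \<Longrightarrow> lin_form (\<lambda>x. pairing z (f x))"
  by (simp add: lin_form_def pairing_def lin_add lin_smul sum.distrib sum_distrib_left
      algebra_simps)

lemma pairing_add_left: "pairing (x + y) u = pairing x u + pairing y u"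
  by (simp add: pairing_def sum.distrib algebra_simps)

lemma pairing_add_right: "pairing z (x + y) = pairing z x + pairing z y"
  by (simp add: pairing_def sum.distrib algebra_simps)

lemma pairing_smul_left: "pairing (smul c x) u = c * pairing x u"
  by (simp add: pairing_def sum_distrib_left algebra_simps)

lemma pairing_smul_right: "pairing z (smul c x) = c * pairing z x"
  by (simp add: pairing_def sum_distrib_left algebra_simps)

lemma pairing_basis_left: "pairing (basis a) u = u a"
proof -
  have "pairing (basis a) u = (\<Sum>i\<in>UNIV. if i = a then u i else 0)"
    unfolding pairing_def basis_apply by (rule sum.cong) auto
  then show ?thesis by simp
qed

lemma pairing_commute: "pairing z u = pairing u z"
  by (simp add: pairing_def mult.commute)

lemma pairing_basis_right: "pairing z (basis a) = z a"
  by (simp add: pairing_commute[of z] pairing_basis_left)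

lemma pairing_ext: "(\<And>z. pairing z x = pairing z y) \<Longrightarrow> x = y"
  by (rule ext) (metis pairing_basis_left)

lemma lin_Tr: "lin (Tr r)"
  by (simp add: lin_def Tr_def fun_eq_iff sum.distrib sum_distrib_left algebra_simps)

lemma Tr_add: "Tr (r + s) z = Tr r z + Tr s z"
  by (simp add: Tr_def fun_eq_iff sum.distrib algebra_simps)

lemma Tr_basis: "Tr r (basis b) = r b"
  by (simp add: Tr_def basis_apply if_distrib fun_eq_iff cong: if_cong)

lemma pairing_Tr_tau: "pairing z (Tr (tau r) x) = pairing x (Tr r z)"
  unfolding pairing_def Tr_def tau_def
  by (simp add: sum_distrib_left sum_distrib_right algebra_simps) (rule sum.swap)

lemma tau_symmetric_part: "tau (r + tau r) = r + tau r"
  for r :: "'n \<Rightarrow> 'n \<Rightarrow> 'k::ab_semigroup_add"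
  by (rule ext)+ (simp add: tau_def add.commute)

lemma bilin_lin_left: "bilin op \<Longrightarrow> lin (op x)"
  by (simp add: bilin_def)

lemma bilin_lin_right: "bilin op \<Longrightarrow> lin (\<lambda>x. op x y)"
  by (simp add: bilin_def)

lemma bilin_eq_sum_basis:
  fixes x :: "'n::finite \<Rightarrow> 'k::field"
  assumes "bilin op"
  shows "op x y = (\<Sum>l\<in>UNIV. \<Sum>j\<in>UNIV. smul (x l * y j) (op (basis l) (basis j)))"
proof -
  have "op x y = (\<Sum>l\<in>UNIV. smul (x l) (op (basis l) y))"
    using lin_eq_sum_basis[OF bilin_lin_right[OF assms]] .
  also have "\<dots> = (\<Sum>l\<in>UNIV. smul (x l) (\<Sum>j\<in>UNIV. smul (y j) (op (basis l) (basis j))))"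
    using lin_eq_sum_basis[OF bilin_lin_left[OF assms]] by metis
  finally show ?thesis
    by (simp add: fun_eq_iff sum_fun_apply sum_distrib_left mult.assoc)
qed

lemma bilin_circ: "bilin sc \<Longrightarrow> bilin pr \<Longrightarrow> bilin (circ sc pr)"
  by (simp add: bilin_def lin_def circ_def fun_eq_iff algebra_simps)

lemma bilin_odot: "bilin sc \<Longrightarrow> bilin pr \<Longrightarrow> bilin (odot sc pr)"
  by (simp add: bilin_def lin_def odot_def fun_eq_iff algebra_simps)

lemma bilin_star: "bilin sc \<Longrightarrow> bilin pr \<Longrightarrow> bilin (star sc pr)"
  by (simp add: bilin_def lin_def star_def circ_def fun_eq_iff algebra_simps)

lemma bilin_form_add_left: "bilin_form w \<Longrightarrow> w (x + y) z = w x z + w y z"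
  by (simp add: bilin_form_def)

lemma bilin_form_add_right: "bilin_form w \<Longrightarrow> w x (y + z) = w x y + w x z"
  by (simp add: bilin_form_def)

lemma bilin_form_smul_left: "bilin_form w \<Longrightarrow> w (smul c x) z = c * w x z"
  by (simp add: bilin_form_def)

lemma bilin_form_smul_right: "bilin_form w \<Longrightarrow> w x (smul c z) = c * w x z"
  by (simp add: bilin_form_def)

lemma bilin_form_uminus_left: "bilin_form w \<Longrightarrow> w (- x) z = - w x z"
  by (simp add: uminus_eq_smul[of x] bilin_form_smul_left del: smul_apply)

lemma bilin_form_uminus_right: "bilin_form w \<Longrightarrow> w x (- z) = - w x z"
  by (simp add: uminus_eq_smul[of z] bilin_form_smul_right del: smul_apply)

lemma bilin_form_diff_left: "bilin_form w \<Longrightarrow> w (x - y) z = w x z - w y z"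
  using bilin_form_add_left[of w x "- y" z] bilin_form_uminus_left[of w y z] by simp

lemma bilin_form_diff_right: "bilin_form w \<Longrightarrow> w x (y - z) = w x y - w x z"
  using bilin_form_add_right[of w x y "- z"] bilin_form_uminus_right[of w x z] by simp

lemma lin_sharp: "bilin_form w \<Longrightarrow> lin (sharp w)"
  by (simp add: lin_def sharp_def bilin_form_def fun_eq_iff)

lemma pairing_sharp: "bilin_form w \<Longrightarrow> pairing (sharp w x) u = w x u"
proof -
  assume "bilin_form w"
  then have "lin_form (w x)"
    by (simp add: lin_form_def bilin_form_def)
  then show ?thesis
    by (simp add: pairing_def sharp_def lin_form_eq_sum_basis[of "w x" u] mult.commute)
qed

lemma bij_sharp:
  fixes w :: "('n::finite \<Rightarrow> 'k::field) \<Rightarrow> ('n \<Rightarrow> 'k) \<Rightarrow> 'k"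
  assumes bf: "bilin_form w" and nondeg: "\<And>x. (\<And>y. w x y = 0) \<Longrightarrow> x = 0"
  shows "bij (sharp w)"
proof -
  have "inj (sharp w)"
  proof (rule injI)
    fix x y assume "sharp w x = sharp w y"
    then have "w x u = w y u" for u
      by (metis pairing_sharp[OF bf])
    then have "x - y = 0"
      by (intro nondeg) (simp add: bilin_form_diff_left[OF bf])
    then show "x = y"
      by simp
  qed
  then show ?thesis
    using lin_inj_imp_surj[OF lin_sharp[OF bf]] by (simp add: bij_def)
qed

section \<open>The tensor \<open>S(r)\<close> and invariance\<close>

text \<open>\<open>Sop_form sc pr r \<xi> \<eta> \<zeta>\<close> is \<open>\<langle>S(r), \<xi> \<otimes> \<eta> \<otimes> \<zeta>\<rangle>\<close>, with the legs of \<open>r\<close> absorbed into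
  \<open>T\<^sub>r\<close> and \<open>T\<^sub>\<tau>\<^sub>(\<^sub>r\<^sub>)\<close>.\<close>

definition Sop_form where
  "Sop_form sc pr r \<xi> \<eta> \<zeta> = pairing \<zeta> (circ sc pr (Tr r \<eta>) (Tr r \<xi>))
     - pairing \<eta> (odot sc pr (Tr r \<xi>) (Tr (tau r) \<zeta>))
     - pairing \<xi> (sc (Tr (tau r) \<eta>) (Tr (tau r) \<zeta>))"

lemma Sop_apply:
  assumes bs: "bilin sc" and bp: "bilin pr"
  shows "Sop sc pr r a b c = Sop_form sc pr r (basis a) (basis b) (basis c)"
proof -
  have "Sop sc pr r a b c =
      (\<Sum>l\<in>UNIV. \<Sum>j\<in>UNIV. r b l * r a j * circ sc pr (basis l) (basis j) c)
    - (\<Sum>l\<in>UNIV. \<Sum>j\<in>UNIV. r a l * r j c * odot sc pr (basis l) (basis j) b)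
    - (\<Sum>l\<in>UNIV. \<Sum>j\<in>UNIV. r l b * r j c * sc (basis l) (basis j) a)"
    unfolding Sop_def
    by (simp add: sum_fun_apply tensor3_def basis_apply sum_subtractf mult_indicator_simps)
      (subst sum.swap, simp add: mult_ac)
  also have "\<dots> = Sop_form sc pr r (basis a) (basis b) (basis c)"
    unfolding Sop_form_def pairing_basis_left Tr_basis
    by (subst bilin_eq_sum_basis[OF bilin_circ[OF bs bp]],
        subst bilin_eq_sum_basis[OF bilin_odot[OF bs bp]], subst bilin_eq_sum_basis[OF bs])
      (simp add: tau_def sum_fun_apply)
  finally show ?thesis .
qed

lemma lin_form_Sop_form:
  assumes "bilin sc" and "bilin pr"
  shows "lin_form (\<lambda>\<xi>. Sop_form sc pr r \<xi> \<eta> \<zeta>)" and "lin_form (\<lambda>\<eta>. Sop_form sc pr r \<xi> \<eta> \<zeta>)"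
    and "lin_form (\<lambda>\<zeta>. Sop_form sc pr r \<xi> \<eta> \<zeta>)"
  unfolding Sop_form_def
  by (intro lin_form_diff lin_form_pairing_left lin_form_pairing_comp;
      rule lin_comp[OF bilin_lin_left] lin_comp[OF bilin_lin_right];
      intro assms bilin_circ bilin_odot lin_Tr)+
lemma Sop_eq_0_iff:
  assumes "bilin sc" and "bilin pr"
  shows "Sop sc pr r = 0 \<longleftrightarrow> (\<forall>\<xi> \<eta> \<zeta>. Sop_form sc pr r \<xi> \<eta> \<zeta> = 0)"
proof
  assume "Sop sc pr r = 0"
  then have "Sop_form sc pr r (basis a) (basis b) (basis c) = 0" for a b c
    using Sop_apply[OF assms, of r a b c] by simp
  then show "\<forall>\<xi> \<eta> \<zeta>. Sop_form sc pr r \<xi> \<eta> \<zeta> = 0"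
    using trilinear_eq_zero_on_basis[OF lin_form_Sop_form[OF assms]] by blast
qed (simp add: fun_eq_iff Sop_apply[OF assms])

lemma tmap_left_apply:
  assumes "lin f"
  shows "tmap f id s a b = f (Tr (tau s) (basis b)) a"
proof -
  have "f (Tr (tau s) (basis b)) = (\<Sum>i\<in>UNIV. smul (s i b) (f (basis i)))"
    using lin_eq_sum_basis[OF assms, of "Tr (tau s) (basis b)"] by (simp add: Tr_basis tau_def)
  then show ?thesis
    by (simp add: tmap_def sum_fun_apply tensor2_def basis_apply mult_indicator_simps mult_ac)
qed

lemma tmap_right_apply:
  assumes "lin g"
  shows "tmap id g s a b = g (Tr s (basis a)) b"
proof -
  have "g (Tr s (basis a)) = (\<Sum>i\<in>UNIV. smul (s a i) (g (basis i)))"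
    using lin_eq_sum_basis[OF assms, of "Tr s (basis a)"] by (simp add: Tr_basis)
  then show ?thesis
    by (simp add: tmap_def sum_fun_apply tensor2_def basis_apply mult_indicator_simps mult_ac)
qed

lemma tmap_diff_eq_0_iff:
  assumes f: "lin f" and g: "lin g"
  shows "tmap f id s - tmap id g s = 0 \<longleftrightarrow>
     (\<forall>\<xi> \<eta>. pairing \<xi> (f (Tr (tau s) \<eta>)) = pairing \<eta> (g (Tr s \<xi>)))"
proof -
  define F where "F \<xi> \<eta> = pairing \<xi> (f (Tr (tau s) \<eta>)) - pairing \<eta> (g (Tr s \<xi>))" for \<xi> \<eta>
  have lin_F: "lin_form (\<lambda>\<xi>. F \<xi> \<eta>)" "lin_form (F \<xi>)" for \<xi> \<eta>
    unfolding F_def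
    by (rule lin_form_diff lin_form_pairing_left lin_form_pairing_comp lin_comp[OF g lin_Tr]
        lin_comp[OF f lin_Tr])+
  have "(tmap f id s - tmap id g s) a b = F (basis a) (basis b)" for a b
    by (simp add: F_def tmap_left_apply[OF f] tmap_right_apply[OF g] pairing_basis_left)
  then have "tmap f id s - tmap id g s = 0 \<longleftrightarrow> (\<forall>a b. F (basis a) (basis b) = 0)"
    by (simp add: fun_eq_iff)
  also have "\<dots> \<longleftrightarrow> (\<forall>\<xi> \<eta>. F \<xi> \<eta> = 0)"
    using bilinear_eq_zero_on_basis[of F, OF lin_F] by blast
  finally show ?thesis
    by (simp add: F_def)
qed

definition invariant_form ::
  "(('n \<Rightarrow> 'k::field) \<Rightarrow> ('n \<Rightarrow> 'k) \<Rightarrow> ('n \<Rightarrow> 'k)) \<Rightarrow> (('n \<Rightarrow> 'k) \<Rightarrow> ('n \<Rightarrow> 'k) \<Rightarrow> ('n \<Rightarrow> 'k))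
    \<Rightarrow> (('n \<Rightarrow> 'k) \<Rightarrow> ('n \<Rightarrow> 'k) \<Rightarrow> 'k) \<Rightarrow> bool" where
  "invariant_form sc pr w \<longleftrightarrow>
     (\<forall>x y z. w (pr x y) z = w x (circ sc pr y z + circ sc pr z y)) \<and>
     (\<forall>x y z. w (sc x y) z = - w y (circ sc pr x z))"

lemma invariant_form_succD: "invariant_form sc pr w \<Longrightarrow> w (sc x y) z = - w y (circ sc pr x z)"
  by (simp add: invariant_form_def)

lemma invariant_form_precD: "invariant_form sc pr w \<Longrightarrow> w (pr x y) z = w x (star sc pr y z)"
  by (simp add: invariant_form_def star_def)

lemma invariant_form_iff:
  assumes bf: "bilin_form w" and sym: "\<And>x y. w x y = w y x"
  shows "invariant_form sc pr w \<longleftrightarrow>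
    (\<forall>x u v. w u (odot sc pr x v) = w v (circ sc pr u x)) \<and>
    (\<forall>x u v. w u (star sc pr x v) = w v (pr u x))"
proof -
  have star: "w u (star sc pr x v) = w v (pr u x) \<longleftrightarrow>
      w (pr u x) v = w u (circ sc pr x v + circ sc pr v x)" for x u v
    unfolding star_def using sym[of u] sym[of v] by auto
  have odot: "w u (odot sc pr x v) = w v (circ sc pr u x) \<longleftrightarrow> w (sc x v) u = - w v (circ sc pr x u)"
    if "w (pr v x) u = w v (circ sc pr x u + circ sc pr u x)" for x u v
  proof -
    have "w u (odot sc pr x v) = w (sc x v) u + w v (circ sc pr x u) + w v (circ sc pr u x)"
      using that sym by (simp add: odot_def bilin_form_add_right[OF bf])
    then show ?thesis
      by (simp add: add.assoc[symmetric] eq_neg_iff_add_eq_0)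
  qed
  show ?thesis
    unfolding invariant_form_def using star odot by blast
qed

lemma pairing_Tr_transfer:
  assumes bf: "bilin_form w" and surj: "surj (sharp w)"
    and Tr_s: "\<And>x. Tr s (sharp w x) = smul c x" and c: "c \<noteq> 0"
    and f: "lin f" and g: "lin g"
  shows "(\<forall>\<xi> \<eta>. pairing \<xi> (f (Tr s \<eta>)) = pairing \<eta> (g (Tr s \<xi>))) \<longleftrightarrow>
    (\<forall>u v. w u (f v) = w v (g u))"
proof -
  have "(\<forall>\<xi> \<eta>. pairing \<xi> (f (Tr s \<eta>)) = pairing \<eta> (g (Tr s \<xi>))) \<longleftrightarrow>
      (\<forall>u v. pairing (sharp w u) (f (Tr s (sharp w v))) =
        pairing (sharp w v) (g (Tr s (sharp w u))))"
    using surj by (metis surjD)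
  also have "\<dots> \<longleftrightarrow> (\<forall>u v. c * w u (f v) = c * w v (g u))"
    by (simp add: Tr_s lin_smul[OF f] lin_smul[OF g] pairing_sharp[OF bf]
        bilin_form_smul_right[OF bf] del: smul_apply)
  finally show ?thesis
    using c by simp
qed

lemma invariant_iff_invariant_form:
  assumes bs: "bilin sc" and bp: "bilin pr" and bf: "bilin_form w" and sym: "\<And>x y. w x y = w y x"
    and surj: "surj (sharp w)" and tau_s: "tau s = s"
    and Tr_s: "\<And>x. Tr s (sharp w x) = smul c x" and c: "c \<noteq> 0"
  shows "invariant sc pr s \<longleftrightarrow> invariant_form sc pr w"
proof -
  note lin_odot = bilin_lin_left[OF bilin_odot[OF bs bp]]
    and lin_circ = bilin_lin_right[OF bilin_circ[OF bs bp]]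
    and lin_star = bilin_lin_left[OF bilin_star[OF bs bp]]
    and lin_pr = bilin_lin_right[OF bp]
  note transfer = pairing_Tr_transfer[OF bf surj Tr_s c]
  have "invariant sc pr s \<longleftrightarrow>
      (\<forall>x. (\<forall>u v. w u (odot sc pr x v) = w v (circ sc pr u x)) \<and>
           (\<forall>u v. w u (star sc pr x v) = w v (pr u x)))"
    unfolding invariant_def tau_s tmap_diff_eq_0_iff[OF lin_odot lin_circ]
      tmap_diff_eq_0_iff[OF lin_star lin_pr] transfer[OF lin_odot lin_circ]
      transfer[OF lin_star lin_pr] ..
  then show ?thesis
    using invariant_form_iff[OF bf sym] by blast
qed

section \<open>Rota--Baxter identities and the correspondence\<close>

definition RB_identity ::
  "(('n \<Rightarrow> 'k::field) \<Rightarrow> ('n \<Rightarrow> 'k) \<Rightarrow> ('n \<Rightarrow> 'k)) \<Rightarrow> 'k \<Rightarrow> (('n \<Rightarrow> 'k) \<Rightarrow> ('n \<Rightarrow> 'k)) \<Rightarrow> bool" where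
  "RB_identity op lam P \<longleftrightarrow>
     (\<forall>x y. op (P x) (P y) = P (op (P x) y + op x (P y) + smul lam (op x y)))"

lemma RB_op_iff: "RB_op sc pr lam P \<longleftrightarrow> lin P \<and> RB_identity sc lam P \<and> RB_identity pr lam P"
  by (auto simp: RB_op_def RB_identity_def)

lemma RB_identity_add:
  assumes lin: "lin P" and "RB_identity op1 lam P" and "RB_identity op2 lam P"
  shows "RB_identity (\<lambda>a b. op1 a b + op2 a b) lam P"
  using assms unfolding RB_identity_def
  by (simp add: lin_add[OF lin, symmetric] smul_add del: smul_apply) (simp add: algebra_simps)

lemma RB_identity_flip: "RB_identity op lam P \<Longrightarrow> RB_identity (\<lambda>a b. op b a) lam P"
  unfolding RB_identity_def by (metis add.commute)

lemma RB_identity_circ: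
  "lin P \<Longrightarrow> RB_identity sc lam P \<Longrightarrow> RB_identity pr lam P \<Longrightarrow> RB_identity (circ sc pr) lam P"
  using RB_identity_add[of P sc lam pr] by (simp add: circ_def[abs_def])

lemma RB_identity_star:
  "lin P \<Longrightarrow> RB_identity (circ sc pr) lam P \<Longrightarrow> RB_identity (star sc pr) lam P"
  using RB_identity_add[OF _ _ RB_identity_flip] by (simp add: star_def[abs_def])

locale rb_correspondence =
  fixes sc pr :: "('n::finite \<Rightarrow> 'k::field) \<Rightarrow> ('n \<Rightarrow> 'k) \<Rightarrow> ('n \<Rightarrow> 'k)"
    and w :: "('n \<Rightarrow> 'k) \<Rightarrow> ('n \<Rightarrow> 'k) \<Rightarrow> 'k"
    and P :: "('n \<Rightarrow> 'k) \<Rightarrow> ('n \<Rightarrow> 'k)"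
    and r :: "'n \<Rightarrow> 'n \<Rightarrow> 'k"
    and lam :: 'k
  assumes bilin_sc: "bilin sc" and bilin_pr: "bilin pr"
    and bilin_form_w: "bilin_form w" and symmetric_w: "\<And>x y. w x y = w y x"
    and nondegenerate_w: "\<And>x. (\<And>y. w x y = 0) \<Longrightarrow> x = 0"
    and Tr_sharp: "\<And>x. Tr r (sharp w x) = P x"
    and Tr_tau_sharp: "\<And>x. Tr (tau r) (sharp w x) = - (P x + smul lam x)"
begin

lemma bij_sharp_w: "bij (sharp w)"
  using bij_sharp[OF bilin_form_w nondegenerate_w] .

lemma surj_sharp_w: "surj (sharp w)"
  using bij_sharp_w by (rule bij_is_surj)

lemma lin_P: "lin P"
  using lin_comp[OF lin_Tr[of r] lin_sharp[OF bilin_form_w]] by (simp add: Tr_sharp)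

lemma w_ext: "(\<And>z. w x z = w y z) \<Longrightarrow> x = y"
  using nondegenerate_w[of "x - y"] by (simp add: bilin_form_diff_left[OF bilin_form_w])

lemma w_P_left: "w (P x) y = - w x (P y + smul lam y)"
proof -
  have "w (P x) y = pairing (sharp w y) (Tr r (sharp w x))"
    by (simp add: Tr_sharp pairing_sharp[OF bilin_form_w] symmetric_w[of y])
  also have "\<dots> = pairing (sharp w x) (Tr (tau r) (sharp w y))"
    by (simp add: pairing_Tr_tau)
  also have "\<dots> = - w x (P y + smul lam y)"
    by (simp only: Tr_tau_sharp pairing_sharp[OF bilin_form_w]
        bilin_form_uminus_right[OF bilin_form_w])
  finally show ?thesis .
qed

lemma w_P_compatible: "w (P x) y + w x (P y) + lam * w x y = 0"
  by (simp add: w_P_left bilin_form_add_right[OF bilin_form_w]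
      bilin_form_smul_right[OF bilin_form_w] del: smul_apply)

lemma w_P_plus_smul_left: "w (P x + smul lam x) y = - w x (P y)"
  by (simp add: w_P_left bilin_form_add_left[OF bilin_form_w] bilin_form_add_right[OF bilin_form_w]
      bilin_form_smul_left[OF bilin_form_w] bilin_form_smul_right[OF bilin_form_w] del: smul_apply)

lemma Tr_symmetric_part_sharp: "Tr (r + tau r) (sharp w x) = smul (- lam) x"
  by (simp add: Tr_add Tr_sharp Tr_tau_sharp fun_eq_iff)

lemma bij_Tr_symmetric_part:
  assumes "lam \<noteq> 0"
  shows "bij (Tr (r + tau r))"
proof -
  have Tr_eq: "Tr (r + tau r) \<xi> = smul (- lam) (inv (sharp w) \<xi>)" for \<xi>
    using Tr_symmetric_part_sharp[of "inv (sharp w) \<xi>"] by (simp add: surj_f_inv_f[OF surj_sharp_w])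
  have "Tr (r + tau r) = smul (- lam) \<circ> inv (sharp w)"
    by (rule ext) (simp only: Tr_eq comp_apply)
  moreover have "bij (smul (- lam))"
    using assms by (intro o_bij[of "smul (- inverse lam)"]) (simp_all add: fun_eq_iff)
  ultimately show ?thesis
    using bij_comp[OF bij_imp_bij_inv[OF bij_sharp_w]] by simp
qed

lemma invariant_symmetric_part_iff:
  assumes "lam \<noteq> 0"
  shows "invariant sc pr (r + tau r) \<longleftrightarrow> invariant_form sc pr w"
  using assms by (intro invariant_iff_invariant_form[OF bilin_sc bilin_pr bilin_form_w symmetric_w
      surj_sharp_w tau_symmetric_part Tr_symmetric_part_sharp]) simp

lemma w_eq_0_iff: "(\<forall>z. w z x = 0) \<longleftrightarrow> x = 0"
  using nondegenerate_w symmetric_w bilin_form_diff_right[OF bilin_form_w, of _ 0 0] by auto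

lemma Sop_form_sharp:
  assumes "invariant_form sc pr w"
  shows "Sop_form sc pr r (sharp w y) (sharp w x) (sharp w z) =
    w z (circ sc pr (P x) (P y)
      - P (circ sc pr (P x) y + circ sc pr x (P y) + smul lam (circ sc pr x y)))"
proof -
  note sc_inv = invariant_form_succD[OF assms] and pr_inv = invariant_form_precD[OF assms]
  define Qx where "Qx = P x + smul lam x"
  define Qz where "Qz = P z + smul lam z"
  have odot_term: "w x (odot sc pr (P y) Qz) = w Qz (circ sc pr x (P y))"
  proof -
    have "w x (odot sc pr (P y) Qz) = w (sc (P y) Qz) x + w (pr Qz (P y)) x"
      by (simp add: symmetric_w[of x] odot_def bilin_form_add_left[OF bilin_form_w])
    also have "\<dots> = w Qz (circ sc pr x (P y))"
      by (simp add: sc_inv pr_inv star_def bilin_form_add_right[OF bilin_form_w])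
    finally show ?thesis .
  qed
  have sc_term: "w y (sc Qx Qz) = - w Qz (circ sc pr Qx y)"
    using sc_inv symmetric_w by metis
  have circ_Qx: "circ sc pr Qx y = circ sc pr (P x) y + smul lam (circ sc pr x y)"
    using lin_add[OF bilin_lin_right[OF bilin_circ[OF bilin_sc bilin_pr]]]
      lin_smul[OF bilin_lin_right[OF bilin_circ[OF bilin_sc bilin_pr]]]
    by (simp add: Qx_def del: smul_apply)
  have "Sop_form sc pr r (sharp w y) (sharp w x) (sharp w z) =
      w z (circ sc pr (P x) (P y)) + w x (odot sc pr (P y) Qz) - w y (sc Qx Qz)"
    unfolding Sop_form_def Tr_sharp Tr_tau_sharp Qx_def[symmetric] Qz_def[symmetric]
      pairing_sharp[OF bilin_form_w]
    by (simp add: lin_uminus[OF bilin_lin_left[OF bilin_odot[OF bilin_sc bilin_pr]]]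
        lin_uminus[OF bilin_lin_left[OF bilin_sc]] lin_uminus[OF bilin_lin_right[OF bilin_sc]]
        bilin_form_uminus_right[OF bilin_form_w])
  also have "\<dots> = w z (circ sc pr (P x) (P y)) - w z (P (circ sc pr x (P y)))
      - w z (P (circ sc pr Qx y))"
    by (simp add: odot_term sc_term w_P_plus_smul_left[of z, folded Qz_def])
  also have "\<dots> = w z (circ sc pr (P x) (P y)
      - P (circ sc pr (P x) y + circ sc pr x (P y) + smul lam (circ sc pr x y)))"
    by (simp add: circ_Qx lin_add[OF lin_P] bilin_form_diff_right[OF bilin_form_w]
        bilin_form_add_right[OF bilin_form_w] del: smul_apply)
  finally show ?thesis .
qed

lemma Sop_eq_0_iff_RB_circ:
  assumes "invariant_form sc pr w"
  shows "Sop sc pr r = 0 \<longleftrightarrow> RB_identity (circ sc pr) lam P"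
proof -
  have "Sop sc pr r = 0 \<longleftrightarrow>
      (\<forall>x y z. Sop_form sc pr r (sharp w y) (sharp w x) (sharp w z) = 0)"
    unfolding Sop_eq_0_iff[OF bilin_sc bilin_pr] by (metis surj_sharp_w surjD)
  then show ?thesis
    by (simp add: Sop_form_sharp[OF assms] w_eq_0_iff RB_identity_def)
qed

lemma RB_identity_succ:
  assumes inv: "invariant_form sc pr w" and rb: "RB_identity (circ sc pr) lam P"
  shows "RB_identity sc lam P"
  unfolding RB_identity_def
proof (intro allI w_ext)
  fix x y z
  note sc_inv = invariant_form_succD[OF inv]
  note lin_circ = bilin_lin_left[OF bilin_circ[OF bilin_sc bilin_pr]]
  define Qz where "Qz = P z + smul lam z"
  have key: "P (circ sc pr (P x) z) + smul lam (circ sc pr (P x) z)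
      = circ sc pr (P x) Qz - P (circ sc pr x Qz)"
    using rb unfolding RB_identity_def Qz_def
    by (simp add: lin_add[OF lin_P] lin_smul[OF lin_P] lin_add[OF lin_circ] lin_smul[OF lin_circ]
        del: smul_apply)
  have "w (sc (P x) (P y)) z = w y (P (circ sc pr (P x) z) + smul lam (circ sc pr (P x) z))"
    by (simp add: sc_inv w_P_left)
  also have "\<dots> = w y (circ sc pr (P x) Qz - P (circ sc pr x Qz))"
    by (simp only: key)
  also have "\<dots> = w y (circ sc pr (P x) Qz) + w (P y) (circ sc pr x Qz)
      + lam * w y (circ sc pr x Qz)"
    by (simp add: w_P_left bilin_form_add_right[OF bilin_form_w]
        bilin_form_diff_right[OF bilin_form_w] bilin_form_smul_right[OF bilin_form_w]
        del: smul_apply)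
  also have "\<dots> = - (w (sc (P x) y) Qz + w (sc x (P y)) Qz + lam * w (sc x y) Qz)"
    by (simp add: sc_inv)
  also have "\<dots> = w (P (sc (P x) y + sc x (P y) + smul lam (sc x y))) z"
    by (simp add: w_P_left Qz_def bilin_form_add_left[OF bilin_form_w]
        bilin_form_smul_left[OF bilin_form_w] del: smul_apply)
  finally show "w (sc (P x) (P y)) z = w (P (sc (P x) y + sc x (P y) + smul lam (sc x y))) z" .
qed

lemma RB_identity_prec:
  assumes inv: "invariant_form sc pr w" and rb: "RB_identity (circ sc pr) lam P"
  shows "RB_identity pr lam P"
  unfolding RB_identity_def
proof (intro allI w_ext)
  fix x y z
  note pr_inv = invariant_form_precD[OF inv]
  note lin_star = bilin_lin_left[OF bilin_star[OF bilin_sc bilin_pr]]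
  define Qz where "Qz = P z + smul lam z"
  have key: "- (P (star sc pr (P y) z) + smul lam (star sc pr (P y) z))
      = P (star sc pr y Qz) - star sc pr (P y) Qz"
    using RB_identity_star[OF lin_P rb] unfolding RB_identity_def Qz_def
    by (simp add: lin_add[OF lin_P] lin_smul[OF lin_P] lin_add[OF lin_star] lin_smul[OF lin_star]
        del: smul_apply)
  have "w (pr (P x) (P y)) z = - w x (P (star sc pr (P y) z) + smul lam (star sc pr (P y) z))"
    by (simp add: pr_inv w_P_left)
  also have "\<dots> = w x (P (star sc pr y Qz) - star sc pr (P y) Qz)"
    by (simp only: key[symmetric] bilin_form_uminus_right[OF bilin_form_w])
  also have "\<dots> = - (w (P x) (star sc pr y Qz) + w x (star sc pr (P y) Qz)
      + lam * w x (star sc pr y Qz))"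
    by (simp add: w_P_left bilin_form_add_right[OF bilin_form_w]
        bilin_form_diff_right[OF bilin_form_w] bilin_form_smul_right[OF bilin_form_w]
        del: smul_apply)
  also have "\<dots> = - (w (pr (P x) y) Qz + w (pr x (P y)) Qz + lam * w (pr x y) Qz)"
    by (simp add: pr_inv)
  also have "\<dots> = w (P (pr (P x) y + pr x (P y) + smul lam (pr x y))) z"
    by (simp add: w_P_left Qz_def bilin_form_add_left[OF bilin_form_w]
        bilin_form_smul_left[OF bilin_form_w] del: smul_apply)
  finally show "w (pr (P x) (P y)) z = w (P (pr (P x) y + pr x (P y) + smul lam (pr x y))) z" .
qed

lemma quadRB_iff:
  "quadRB sc pr P w lam \<longleftrightarrow> LDA sc pr \<and> invariant_form sc pr w \<and> RB_identity (circ sc pr) lam P"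
proof -
  have "quadratic sc pr w \<longleftrightarrow> LDA sc pr \<and> invariant_form sc pr w"
    using bilin_form_w symmetric_w nondegenerate_w by (auto simp: quadratic_def invariant_form_def)
  then show ?thesis
    unfolding quadRB_def RB_op_iff
    using lin_P w_P_compatible RB_identity_circ RB_identity_succ RB_identity_prec by blast
qed

lemma factorizable_iff:
  assumes "lam \<noteq> 0"
  shows "factorizable sc pr r \<longleftrightarrow> invariant_form sc pr w \<and> RB_identity (circ sc pr) lam P"
  unfolding factorizable_def
  using bij_Tr_symmetric_part[OF assms] invariant_symmetric_part_iff[OF assms] Sop_eq_0_iff_RB_circ
  by blast

end

lemma rb_correspondence_of_bij:
  fixes sc pr :: "('n::finite \<Rightarrow> 'k::field) \<Rightarrow> ('n \<Rightarrow> 'k) \<Rightarrow> ('n \<Rightarrow> 'k)"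
  assumes lam: "lam \<noteq> 0" and bs: "bilin sc" and bp: "bilin pr" and bij: "bij (Tr (r + tau r))"
  defines "w \<equiv> \<lambda>x y. - lam * pairing (inv (Tr (r + tau r)) x) y"
  shows "rb_correspondence sc pr w (\<lambda>x. Tr r (sharp w x)) r lam"
proof -
  define B where "B = Tr (r + tau r)"
  have B_inv: "B (inv B x) = x" for x
    using bij by (simp add: B_def bij_is_surj surj_f_inv_f)
  have lin_inv_B: "lin (inv B)"
    unfolding B_def by (rule lin_inv[OF lin_Tr bij])
  have w_eq: "w x y = - lam * pairing (inv B x) y" for x y
    by (simp add: w_def B_def)
  have bilin_form_w: "bilin_form w"
    unfolding bilin_form_def w_eq
    by (simp add: lin_add[OF lin_inv_B] lin_smul[OF lin_inv_B] pairing_add_left pairing_add_right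
        pairing_smul_left pairing_smul_right algebra_simps del: smul_apply)
  have symmetric_w: "w x y = w y x" for x y
    using pairing_Tr_tau[of "inv B x" "r + tau r" "inv B y"]
    by (simp add: w_eq tau_symmetric_part B_inv flip: B_def)
  have sharp_w: "sharp w x = smul (- lam) (inv B x)" for x
    by (rule ext) (simp add: sharp_def w_eq pairing_basis_right)
  have nondegenerate_w: "x = 0" if "\<And>y. w x y = 0" for x
  proof -
    have "inv B x = 0"
      using that[of "basis _"] lam by (simp add: w_eq pairing_basis_right fun_eq_iff)
    then show "x = 0"
      using B_inv[of x] by (simp add: B_def lin_zero[OF lin_Tr])
  qed
  have B_sharp: "B (sharp w x) = smul (- lam) x" for x
    by (simp add: sharp_w B_def lin_smul[OF lin_Tr] B_inv[unfolded B_def] del: smul_apply)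
  have "Tr (tau r) (sharp w x) = B (sharp w x) - Tr r (sharp w x)" for x
    by (simp add: B_def Tr_add)
  then have "Tr (tau r) (sharp w x) = - (Tr r (sharp w x) + smul lam x)" for x
    by (simp add: B_sharp fun_eq_iff algebra_simps)
  then show ?thesis
    by unfold_locales (use bs bp bilin_form_w symmetric_w nondegenerate_w in auto)
qed

lemma rb_correspondence_of_quadRB:
  assumes "quadRB sc pr P w lam" and Tr_r: "Tr r = P \<circ> inv (sharp w)"
  shows "rb_correspondence sc pr w P r lam"
proof -
  have bs: "bilin sc" and bp: "bilin pr" and bilin_form_w: "bilin_form w"
    and symmetric_w: "\<And>x y. w x y = w y x" and nondegenerate_w: "\<And>x. (\<And>y. w x y = 0) \<Longrightarrow> x = 0"
    and compatible: "\<And>x y. w (P x) y + w x (P y) + lam * w x y = 0"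
    using assms(1) by (auto simp: quadRB_def quadratic_def LDA_def)
  have bij: "bij (sharp w)"
    by (rule bij_sharp[OF bilin_form_w nondegenerate_w])
  have Tr_sharp: "Tr r (sharp w x) = P x" for x
    by (simp add: Tr_r bij_is_inj[OF bij])
  have "Tr (tau r) (sharp w x) = - (P x + smul lam x)" for x
  proof (rule pairing_ext)
    fix \<eta>
    obtain y where y: "\<eta> = sharp w y"
      using bij_is_surj[OF bij] by (metis surjD)
    have "pairing (sharp w y) (Tr (tau r) (sharp w x)) = w x (P y)"
      by (simp add: pairing_Tr_tau Tr_sharp pairing_sharp[OF bilin_form_w])
    also have "\<dots> = - (w (P x) y + lam * w x y)"
      using compatible[of x y] by (simp add: eq_neg_iff_add_eq_0 algebra_simps)
    also have "\<dots> = pairing (sharp w y) (- (P x + smul lam x))"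
      using symmetric_w[of y "P x"] symmetric_w[of y x]
      by (simp add: pairing_sharp[OF bilin_form_w] bilin_form_uminus_right[OF bilin_form_w]
          bilin_form_diff_right[OF bilin_form_w] bilin_form_smul_right[OF bilin_form_w]
        del: smul_apply)
    finally show "pairing \<eta> (Tr (tau r) (sharp w x)) = pairing \<eta> (- (P x + smul lam x))"
      using y by simp
  qed
  then show ?thesis
    by unfold_locales (use bs bp bilin_form_w symmetric_w nondegenerate_w Tr_sharp in auto)
qed

theorem mainTheorem17:
  fixes lam :: "'k::field"
    and succ prec :: "('n::finite \<Rightarrow> 'k) \<Rightarrow> ('n \<Rightarrow> 'k) \<Rightarrow> ('n \<Rightarrow> 'k)"
  assumes "lam \<noteq> 0"
  shows "(\<forall>r. LDA succ prec \<and> factorizable succ prec r \<longrightarrow>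
            (let w = (\<lambda>x y. - lam * pairing (inv (Tr (r + tau r)) x) y)
             in quadRB succ prec (\<lambda>x. Tr r (sharp w x)) w lam))
       \<and> (\<forall>P w r. quadRB succ prec P w lam \<and> Tr r = P \<circ> inv (sharp w) \<longrightarrow>
            factorizable succ prec r)"
proof (intro conjI allI impI)
  fix r
  assume hyp: "LDA succ prec \<and> factorizable succ prec r"
  define w where "w = (\<lambda>x y. - lam * pairing (inv (Tr (r + tau r)) x) y)"
  interpret rb_correspondence succ prec w "\<lambda>x. Tr r (sharp w x)" r lam
    unfolding w_def using hyp assms
    by (intro rb_correspondence_of_bij) (auto simp: LDA_def factorizable_def)
  show "let w = (\<lambda>x y. - lam * pairing (inv (Tr (r + tau r)) x) y)
      in quadRB succ prec (\<lambda>x. Tr r (sharp w x)) w lam"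
    unfolding Let_def w_def[symmetric] using hyp quadRB_iff factorizable_iff[OF assms] by blast
next
  fix P w r
  assume hyp: "quadRB succ prec P w lam \<and> Tr r = P \<circ> inv (sharp w)"
  then interpret rb_correspondence succ prec w P r lam
    by (intro rb_correspondence_of_quadRB) auto
  show "factorizable succ prec r"
    using hyp quadRB_iff factorizable_iff[OF assms] by blast
qed

end
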